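(* Let $(A,\varphi,\phi_A,[\cdot,\cdot]_A,a_A,K,\langle\cdot,\cdot\rangle)$ be a para-Kähler hom-Lie algebroid, $\Omega(X,Y)=\langle(\phi_A\circ K)X,Y\rangle$, and $\nabla^a$ the connection determined by $\Omega(\nabla^{a}_XY,\phi_A(Z))=a_A(\phi_A(X))\Omega(Y,Z)-\Omega(\phi_A(Y),[X,Z]_A)$. Then for $\epsilon\in\{1,-1\}$: $\nabla^a$ restricts to a product on $\Gamma(A^\epsilon)$, and $(\Gamma(A^\epsilon),\nabla^a,\phi_{A^\epsilon})$ is a hom-left symmetric algebra, i.e. for all $X,Y,Z\in\Gamma(A^\epsilon)$, $$\nabla^a_{\nabla^a_XY}\phi_A(Z)-\nabla^a_{\phi_A(X)}\nabla^a_YZ=\nabla^a_{\nabla^a_YX}\phi_A(Z)-\nabla^a_{\phi_A(Y)}\nabla^a_XZ;$$ its commutator $\nabla^a_XY-\nabla^a_YX$ equals $[X,Y]_A$ and defines a hom-Lie algebra structure on $\Gamma(A^\epsilon)$; consequently $(A^\epsilon,\varphi,\phi_{A^\epsilon},[\cdot,\cdot]_{A^\epsilon},a_{A^\epsilon})$ (restrictions of $\phi_A,[\cdot,\cdot]_A,a_A$) is a hom-Lie algebroid.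
   Context: Standing conventions. $M$ is a smooth manifold, $\varphi:M\to M$ a diffeomorphism, $\varphi^*f=f\circ\varphi$. A hom-bundle $(A\to M,\varphi,\phi_A)$ is a vector bundle $A\to M$ together with an invertible $\mathbb R$-linear map $\phi_A:\Gamma(A)\to\Gamma(A)$ with $\phi_A(fX)=\varphi^*(f)\phi_A(X)$. $\varphi^!TM$ is the pullback bundle; its sections are identified with $\mathbb R$-linear maps $D:C^\infty(M)\to C^\infty(M)$ with $D(fg)=D(f)\varphi^*(g)+\varphi^*(f)D(g)$. A hom-Lie algebroid $(A,\varphi,\phi_A,[\cdot,\cdot]_A,a_A)$ consists of a hom-bundle, a skew-symmetric $\mathbb R$-bilinear bracket on $\Gamma(A)$ with $\phi_A[X,Y]_A=[\phi_A X,\phi_A Y]_A$ and $[\phi_A(X),[Y,Z]_A]_A+[\phi_A(Y),[Z,X]_A]_A+[\phi_A(Z),[X,Y]_A]_A=0$ (a hom-Lie algebra), and a bundle map $a_A:A\to\varphi^!TM$ such that $[X,fY]_A=\varphi^*(f)[X,Y]_A+a_A(\phi_A(X))(f)\phi_A(Y)$, $\varphi^*\circ a_A(X)=a_A(\phi_A(X))\circ\varphi^*$, and $a_A([X,Y]_A)\circ\varphi^*=a_A(\phi_AX)\circ a_A(Y)-a_A(\phi_AY)\circ a_A(X)$. Pseudo-Riemannian metric: a symmetric nondegenerate bilinear form $\langle\cdot,\cdot\rangle$ on $A$ with $\langle\phi_AX,\phi_AY\rangle=\varphi^*\langle X,Y\rangle$. The hom-Levi-Civita connection is the unique $\mathbb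 R$-bilinear $\nabla:\Gamma(A)\times\Gamma(A)\to\Gamma(A)$ with $\nabla_{fX}Y=\varphi^*(f)\nabla_XY$, $\nabla_X(fY)=\varphi^*(f)\nabla_XY+a_A(\phi_AX)(f)\phi_A(Y)$, $[X,Y]_A=\nabla_XY-\nabla_YX$, and $a_A(\phi_AX)\langle Y,Z\rangle=\langle\nabla_XY,\phi_AZ\rangle+\langle\phi_AY,\nabla_XZ\rangle$. An almost para-complex structure is an invertible map $K:\Gamma(A)\to\Gamma(A)$ with $(\phi_A\circ K)^2=\mathrm{Id}$, $\phi_A\circ K=K\circ\phi_A$, and such that $A^1=\ker(\phi_A\circ K-\mathrm{Id})$ and $A^{-1}=\ker(\phi_A\circ K+\mathrm{Id})$ have the same rank (so $A=A^1\oplus A^{-1}$). $(K,\langle\cdot,\cdot\rangle)$ is almost para-Hermitian if $\langle(\phi_A\circ K)X,(\phi_A\circ K)Y\rangle=-\langle X,Y\rangle$. A para-Kähler hom-Lie algebroid is an almost para-Hermitian hom-Lie algebroid with $\nabla_X\phi_A(KY)=\phi_A(K(\nabla_XY))$ for all $X,Y$, $\nabla$ the hom-Levi-Civita connection. $\phi_{A^\epsilon}$ denotes the restriction of $\phi_A$ to $\Gamma(A^\epsilon)$. *)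

theory Defs
  imports Complex_Main "HOL-Library.Function_Algebras"
begin

text \<open>
The manifold M is a type 'm; C^infty(M) is modelled by a
set Cs of real functions on 'm (a unital subalgebra of 'm => real); phi is a bijection of 'm
with phi^* f = f o phi preserving Cs in both directions.  Sections of a vector bundle A are
modelled by a carrier set G of a real vector space 'a together with a Cs-module action sm.
Sections of the pullback bundle phi^! TM are phi-derivations D of Cs.
\<close>

definition pb :: "('m \<Rightarrow> 'm) \<Rightarrow> ('m \<Rightarrow> real) \<Rightarrow> ('m \<Rightarrow> real)" where
  "pb \<phi> f = f \<circ> \<phi>"

definition function_algebra :: "('m \<Rightarrow> real) set \<Rightarrow> bool" where
  "function_algebra Cs \<longleftrightarrow>
     (\<forall>c. (\<lambda>_. c) \<in> Cs) \<and>
     (\<forall>f\<in>Cs. \<forall>g\<in>Cs. f + g \<in> Cs \<and> f * g \<in> Cs \<and> - f \<in> Cs)"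

definition diffeo_on :: "('m \<Rightarrow> real) set \<Rightarrow> ('m \<Rightarrow> 'm) \<Rightarrow> bool" where
  "diffeo_on Cs \<phi> \<longleftrightarrow> bij \<phi> \<and> (\<forall>f. f \<in> Cs \<longleftrightarrow> pb \<phi> f \<in> Cs)"

definition sec_module ::
  "('m \<Rightarrow> real) set \<Rightarrow> (('m \<Rightarrow> real) \<Rightarrow> 'a::real_vector \<Rightarrow> 'a) \<Rightarrow> 'a set \<Rightarrow> bool" where
  "sec_module Cs sm G \<longleftrightarrow>
     0 \<in> G \<and> (\<forall>X\<in>G. \<forall>Y\<in>G. X + Y \<in> G) \<and> (\<forall>X\<in>G. \<forall>f\<in>Cs. sm f X \<in> G) \<and>
     (\<forall>X\<in>G. \<forall>c. sm (\<lambda>_. c) X = c *\<^sub>R X) \<and>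
     (\<forall>X\<in>G. \<forall>Y\<in>G. \<forall>f\<in>Cs. sm f (X + Y) = sm f X + sm f Y) \<and>
     (\<forall>X\<in>G. \<forall>f\<in>Cs. \<forall>g\<in>Cs. sm (f + g) X = sm f X + sm g X) \<and>
     (\<forall>X\<in>G. \<forall>f\<in>Cs. \<forall>g\<in>Cs. sm (f * g) X = sm f (sm g X))"

definition real_linear_on :: "'a::real_vector set \<Rightarrow> ('a \<Rightarrow> 'b::real_vector) \<Rightarrow> bool" where
  "real_linear_on G T \<longleftrightarrow>
     (\<forall>X\<in>G. \<forall>Y\<in>G. T (X + Y) = T X + T Y) \<and> (\<forall>X\<in>G. \<forall>c. T (c *\<^sub>R X) = c *\<^sub>R T X)"

definition hom_bundle ::
  "('m \<Rightarrow> real) set \<Rightarrow> ('m \<Rightarrow> 'm) \<Rightarrow> (('m \<Rightarrow> real) \<Rightarrow> 'a::real_vector \<Rightarrow> 'a) \<Rightarrow> 'a set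
   \<Rightarrow> ('a \<Rightarrow> 'a) \<Rightarrow> bool" where
  "hom_bundle Cs \<phi> sm G phiA \<longleftrightarrow>
     sec_module Cs sm G \<and> bij_betw phiA G G \<and> real_linear_on G phiA \<and>
     (\<forall>X\<in>G. \<forall>f\<in>Cs. phiA (sm f X) = sm (pb \<phi> f) (phiA X))"

definition phi_derivation ::
  "('m \<Rightarrow> real) set \<Rightarrow> ('m \<Rightarrow> 'm) \<Rightarrow> (('m \<Rightarrow> real) \<Rightarrow> ('m \<Rightarrow> real)) \<Rightarrow> bool" where
  "phi_derivation Cs \<phi> D \<longleftrightarrow>
     (\<forall>f\<in>Cs. D f \<in> Cs) \<and>
     (\<forall>f\<in>Cs. \<forall>g\<in>Cs. D (f + g) = D f + D g) \<and>
     (\<forall>f\<in>Cs. \<forall>c. D ((\<lambda>_. c) * f) = (\<lambda>_. c) * D f) \<and>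
     (\<forall>f\<in>Cs. \<forall>g\<in>Cs. D (f * g) = D f * pb \<phi> g + pb \<phi> f * D g)"

text \<open>Bundle map A -> phi^! TM, i.e. a Cs-linear map from sections to phi-derivations.\<close>
definition anchor_map ::
  "('m \<Rightarrow> real) set \<Rightarrow> ('m \<Rightarrow> 'm) \<Rightarrow> (('m \<Rightarrow> real) \<Rightarrow> 'a::real_vector \<Rightarrow> 'a) \<Rightarrow> 'a set
   \<Rightarrow> ('a \<Rightarrow> ('m \<Rightarrow> real) \<Rightarrow> ('m \<Rightarrow> real)) \<Rightarrow> bool" where
  "anchor_map Cs \<phi> sm G a \<longleftrightarrow>
     (\<forall>X\<in>G. phi_derivation Cs \<phi> (a X)) \<and>
     (\<forall>X\<in>G. \<forall>Y\<in>G. \<forall>f\<in>Cs. a (X + Y) f = a X f + a Y f) \<and>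
     (\<forall>X\<in>G. \<forall>g\<in>Cs. \<forall>f\<in>Cs. a (sm g X) f = g * a X f)"

definition hom_Lie_algebra :: "'a::real_vector set \<Rightarrow> ('a \<Rightarrow> 'a) \<Rightarrow> ('a \<Rightarrow> 'a \<Rightarrow> 'a) \<Rightarrow> bool" where
  "hom_Lie_algebra G phiA br \<longleftrightarrow>
     (\<forall>X\<in>G. \<forall>Y\<in>G. br X Y \<in> G) \<and>
     (\<forall>X\<in>G. real_linear_on G (br X)) \<and>
     (\<forall>X\<in>G. \<forall>Y\<in>G. br X Y = - br Y X) \<and>
     (\<forall>X\<in>G. \<forall>Y\<in>G. phiA (br X Y) = br (phiA X) (phiA Y)) \<and>
     (\<forall>X\<in>G. \<forall>Y\<in>G. \<forall>Z\<in>G.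
        br (phiA X) (br Y Z) + br (phiA Y) (br Z X) + br (phiA Z) (br X Y) = 0)"

definition hom_Lie_algebroid ::
  "('m \<Rightarrow> real) set \<Rightarrow> ('m \<Rightarrow> 'm) \<Rightarrow> (('m \<Rightarrow> real) \<Rightarrow> 'a::real_vector \<Rightarrow> 'a) \<Rightarrow> 'a set
   \<Rightarrow> ('a \<Rightarrow> 'a) \<Rightarrow> ('a \<Rightarrow> 'a \<Rightarrow> 'a) \<Rightarrow> ('a \<Rightarrow> ('m \<Rightarrow> real) \<Rightarrow> ('m \<Rightarrow> real)) \<Rightarrow> bool" where
  "hom_Lie_algebroid Cs \<phi> sm G phiA br a \<longleftrightarrow>
     hom_bundle Cs \<phi> sm G phiA \<and> hom_Lie_algebra G phiA br \<and> anchor_map Cs \<phi> sm G a \<and>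
     (\<forall>X\<in>G. \<forall>Y\<in>G. \<forall>f\<in>Cs. br X (sm f Y) = sm (pb \<phi> f) (br X Y) + sm (a (phiA X) f) (phiA Y)) \<and>
     (\<forall>X\<in>G. \<forall>f\<in>Cs. pb \<phi> (a X f) = a (phiA X) (pb \<phi> f)) \<and>
     (\<forall>X\<in>G. \<forall>Y\<in>G. \<forall>f\<in>Cs. a (br X Y) (pb \<phi> f) = a (phiA X) (a Y f) - a (phiA Y) (a X f))"

definition pseudo_metric ::
  "('m \<Rightarrow> real) set \<Rightarrow> ('m \<Rightarrow> 'm) \<Rightarrow> (('m \<Rightarrow> real) \<Rightarrow> 'a::real_vector \<Rightarrow> 'a) \<Rightarrow> 'a set
   \<Rightarrow> ('a \<Rightarrow> 'a) \<Rightarrow> ('a \<Rightarrow> 'a \<Rightarrow> ('m \<Rightarrow> real)) \<Rightarrow> bool" where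
  "pseudo_metric Cs \<phi> sm G phiA g \<longleftrightarrow>
     (\<forall>X\<in>G. \<forall>Y\<in>G. g X Y \<in> Cs) \<and>
     (\<forall>X\<in>G. \<forall>Y\<in>G. g X Y = g Y X) \<and>
     (\<forall>X\<in>G. \<forall>Y\<in>G. \<forall>Z\<in>G. g (X + Y) Z = g X Z + g Y Z) \<and>
     (\<forall>X\<in>G. \<forall>Y\<in>G. \<forall>f\<in>Cs. g (sm f X) Y = f * g X Y) \<and>
     (\<forall>X\<in>G. (\<forall>Y\<in>G. g X Y = 0) \<longrightarrow> X = 0) \<and>
     (\<forall>X\<in>G. \<forall>Y\<in>G. g (phiA X) (phiA Y) = pb \<phi> (g X Y))"

definition hom_Levi_Civita ::
  "('m \<Rightarrow> real) set \<Rightarrow> ('m \<Rightarrow> 'm) \<Rightarrow> (('m \<Rightarrow> real) \<Rightarrow> 'a::real_vector \<Rightarrow> 'a) \<Rightarrow> 'a set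
   \<Rightarrow> ('a \<Rightarrow> 'a) \<Rightarrow> ('a \<Rightarrow> 'a \<Rightarrow> 'a) \<Rightarrow> ('a \<Rightarrow> ('m \<Rightarrow> real) \<Rightarrow> ('m \<Rightarrow> real))
   \<Rightarrow> ('a \<Rightarrow> 'a \<Rightarrow> ('m \<Rightarrow> real)) \<Rightarrow> ('a \<Rightarrow> 'a \<Rightarrow> 'a) \<Rightarrow> bool" where
  "hom_Levi_Civita Cs \<phi> sm G phiA br a g nabla \<longleftrightarrow>
     (\<forall>X\<in>G. \<forall>Y\<in>G. nabla X Y \<in> G) \<and>
     (\<forall>X\<in>G. real_linear_on G (nabla X)) \<and>
     (\<forall>X\<in>G. \<forall>Y\<in>G. \<forall>Z\<in>G. nabla (X + Y) Z = nabla X Z + nabla Y Z) \<and>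
     (\<forall>X\<in>G. \<forall>Y\<in>G. \<forall>f\<in>Cs. nabla (sm f X) Y = sm (pb \<phi> f) (nabla X Y)) \<and>
     (\<forall>X\<in>G. \<forall>Y\<in>G. \<forall>f\<in>Cs.
        nabla X (sm f Y) = sm (pb \<phi> f) (nabla X Y) + sm (a (phiA X) f) (phiA Y)) \<and>
     (\<forall>X\<in>G. \<forall>Y\<in>G. br X Y = nabla X Y - nabla Y X) \<and>
     (\<forall>X\<in>G. \<forall>Y\<in>G. \<forall>Z\<in>G.
        a (phiA X) (g Y Z) = g (nabla X Y) (phiA Z) + g (phiA Y) (nabla X Z))"

text \<open>Almost para-complex structure K (phi_A o K is a bundle endomorphism, i.e. Cs-linear).\<close>
definition almost_para_complex ::
  "('m \<Rightarrow> real) set \<Rightarrow> (('m \<Rightarrow> real) \<Rightarrow> 'a::real_vector \<Rightarrow> 'a) \<Rightarrow> 'a set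
   \<Rightarrow> ('a \<Rightarrow> 'a) \<Rightarrow> ('a \<Rightarrow> 'a) \<Rightarrow> bool" where
  "almost_para_complex Cs sm G phiA K \<longleftrightarrow>
     bij_betw K G G \<and>
     (\<forall>X\<in>G. phiA (K (phiA (K X))) = X) \<and>
     (\<forall>X\<in>G. phiA (K X) = K (phiA X)) \<and>
     (\<forall>X\<in>G. \<forall>Y\<in>G. phiA (K (X + Y)) = phiA (K X) + phiA (K Y)) \<and>
     (\<forall>X\<in>G. \<forall>f\<in>Cs. phiA (K (sm f X)) = sm f (phiA (K X)))"

definition eigen_sections :: "'a::real_vector set \<Rightarrow> ('a \<Rightarrow> 'a) \<Rightarrow> ('a \<Rightarrow> 'a) \<Rightarrow> real \<Rightarrow> 'a set" where
  "eigen_sections G phiA K \<epsilon> = {X \<in> G. phiA (K X) = \<epsilon> *\<^sub>R X}"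

definition para_Kaehler_hom_Lie_algebroid ::
  "('m \<Rightarrow> real) set \<Rightarrow> ('m \<Rightarrow> 'm) \<Rightarrow> (('m \<Rightarrow> real) \<Rightarrow> 'a::real_vector \<Rightarrow> 'a) \<Rightarrow> 'a set
   \<Rightarrow> ('a \<Rightarrow> 'a) \<Rightarrow> ('a \<Rightarrow> 'a \<Rightarrow> 'a) \<Rightarrow> ('a \<Rightarrow> ('m \<Rightarrow> real) \<Rightarrow> ('m \<Rightarrow> real))
   \<Rightarrow> ('a \<Rightarrow> 'a) \<Rightarrow> ('a \<Rightarrow> 'a \<Rightarrow> ('m \<Rightarrow> real)) \<Rightarrow> ('a \<Rightarrow> 'a \<Rightarrow> 'a) \<Rightarrow> bool" where
  "para_Kaehler_hom_Lie_algebroid Cs \<phi> sm G phiA br a K g nabla \<longleftrightarrow>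
     function_algebra Cs \<and> diffeo_on Cs \<phi> \<and>
     hom_Lie_algebroid Cs \<phi> sm G phiA br a \<and>
     pseudo_metric Cs \<phi> sm G phiA g \<and>
     almost_para_complex Cs sm G phiA K \<and>
     (\<forall>X\<in>G. \<forall>Y\<in>G. g (phiA (K X)) (phiA (K Y)) = - g X Y) \<and>
     hom_Levi_Civita Cs \<phi> sm G phiA br a g nabla \<and>
     (\<forall>X\<in>G. \<forall>Y\<in>G. nabla X (phiA (K Y)) = phiA (K (nabla X Y)))"

end

theory Submission
  imports Defs
begin

text \<open>
  Write \<open>J = \<phi>\<^sub>A \<circ> K\<close>. On an eigenbundle \<open>A\<^sup>\<epsilon>\<close> the operator \<open>J\<close> acts by \<open>\<epsilon> = \<plusminus>1\<close>, while
  \<open>g(JX, JY) = -g(X, Y)\<close>; hence \<open>g\<close>, and with it \<open>\<Omega>\<close>, vanishes on \<open>A\<^sup>\<epsilon> \<times> A\<^sup>\<epsilon>\<close>. As the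
  Levi-Civita connection commutes with \<open>J\<close>, it preserves \<open>A\<^sup>\<epsilon>\<close>, and comparing the defining
  relation of \<open>\<nabla>\<^sup>a\<close> with the metric compatibility of \<open>\<nabla>\<close> shows \<open>\<nabla>\<^sup>a = \<nabla>\<close> on \<open>A\<^sup>\<epsilon>\<close>.
  So \<open>\<nabla>\<^sup>a\<close> restricts to \<open>\<Gamma>(A\<^sup>\<epsilon>)\<close> with commutator the bracket. Hom-left-symmetry holds
  for the product induced by any nondegenerate \<open>\<phi>\<^sub>A\<close>-compatible form at every triple on which
  that product is torsion free: pairing with \<open>\<Omega>(-, \<phi>\<^sub>A\<phi>\<^sub>A W)\<close>, the anchor terms cancel by
  the compatibility of anchor and bracket and the bracket terms by the hom-Jacobi identity.
  Finally \<open>A\<^sup>\<epsilon>\<close> is closed under the module operations, the bracket and \<open>\<phi>\<^sub>A\<close>, so the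
  hom-Lie algebroid axioms restrict to it.
\<close>

locale hom_Lie_algebroid_on =
  fixes Cs :: "('m \<Rightarrow> real) set" and \<phi> :: "'m \<Rightarrow> 'm"
    and sm :: "('m \<Rightarrow> real) \<Rightarrow> 'a::real_vector \<Rightarrow> 'a" and G :: "'a set"
    and phiA :: "'a \<Rightarrow> 'a" and br :: "'a \<Rightarrow> 'a \<Rightarrow> 'a"
    and a :: "'a \<Rightarrow> ('m \<Rightarrow> real) \<Rightarrow> ('m \<Rightarrow> real)"
  assumes function_algebra: "function_algebra Cs"
    and diffeo: "diffeo_on Cs \<phi>"
    and algebroid: "hom_Lie_algebroid Cs \<phi> sm G phiA br a"
begin

lemma const_in_Cs: "(\<lambda>_. c) \<in> Cs"
  using function_algebra unfolding function_algebra_def by blast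

lemma pb_in_Cs: "f \<in> Cs \<Longrightarrow> pb \<phi> f \<in> Cs"
  using diffeo unfolding diffeo_on_def by blast

lemma pb_diff: "pb \<phi> (f - h) = pb \<phi> f - pb \<phi> h"
  unfolding pb_def by (simp add: fun_eq_iff)

lemma const_minus_one_times: "(\<lambda>_. -1) * f = - (f :: 'm \<Rightarrow> real)"
  by (simp add: fun_eq_iff)

lemma vector_bundle: "hom_bundle Cs \<phi> sm G phiA"
  and Lie_algebra: "hom_Lie_algebra G phiA br"
  and anchor: "anchor_map Cs \<phi> sm G a"
  and br_sm_right: "\<forall>X\<in>G. \<forall>Y\<in>G. \<forall>f\<in>Cs.
      br X (sm f Y) = sm (pb \<phi> f) (br X Y) + sm (a (phiA X) f) (phiA Y)"
  and anchor_pb: "\<forall>X\<in>G. \<forall>f\<in>Cs. pb \<phi> (a X f) = a (phiA X) (pb \<phi> f)"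
  and anchor_br: "\<forall>X\<in>G. \<forall>Y\<in>G. \<forall>f\<in>Cs.
      a (br X Y) (pb \<phi> f) = a (phiA X) (a Y f) - a (phiA Y) (a X f)"
  using algebroid unfolding hom_Lie_algebroid_def by auto

lemma sections: "sec_module Cs sm G"
  using vector_bundle unfolding hom_bundle_def by blast

lemma zero_in: "0 \<in> G"
  and add_in: "X \<in> G \<Longrightarrow> Y \<in> G \<Longrightarrow> X + Y \<in> G"
  and sm_in: "X \<in> G \<Longrightarrow> f \<in> Cs \<Longrightarrow> sm f X \<in> G"
  and sm_const: "X \<in> G \<Longrightarrow> sm (\<lambda>_. c) X = c *\<^sub>R X"
  and sm_mult: "X \<in> G \<Longrightarrow> f \<in> Cs \<Longrightarrow> h \<in> Cs \<Longrightarrow> sm (f * h) X = sm f (sm h X)"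
  using sections unfolding sec_module_def by blast+

lemma scaleR_in: "X \<in> G \<Longrightarrow> c *\<^sub>R X \<in> G"
  using sm_in[OF _ const_in_Cs] sm_const by metis

lemma diff_in: "X \<in> G \<Longrightarrow> Y \<in> G \<Longrightarrow> X - Y \<in> G"
  using add_in[of X "(-1) *\<^sub>R Y"] scaleR_in[of Y "-1"] by simp

lemma phiA_bij: "bij_betw phiA G G"
  and phiA_add: "X \<in> G \<Longrightarrow> Y \<in> G \<Longrightarrow> phiA (X + Y) = phiA X + phiA Y"
  and phiA_scaleR: "X \<in> G \<Longrightarrow> phiA (c *\<^sub>R X) = c *\<^sub>R phiA X"
  and phiA_sm: "X \<in> G \<Longrightarrow> f \<in> Cs \<Longrightarrow> phiA (sm f X) = sm (pb \<phi> f) (phiA X)"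
  using vector_bundle unfolding hom_bundle_def real_linear_on_def by blast+

lemma phiA_in: "X \<in> G \<Longrightarrow> phiA X \<in> G"
  using phiA_bij by (rule bij_betw_apply)

lemma phiA_inj: "X \<in> G \<Longrightarrow> Y \<in> G \<Longrightarrow> phiA X = phiA Y \<Longrightarrow> X = Y"
  using phiA_bij by (metis bij_betw_imp_inj_on inj_onD)

lemma phiA_surj: "Y \<in> G \<Longrightarrow> \<exists>X\<in>G. Y = phiA X"
  using phiA_bij by (metis bij_betw_imp_surj_on imageE)

lemma phiA_diff: "X \<in> G \<Longrightarrow> Y \<in> G \<Longrightarrow> phiA (X - Y) = phiA X - phiA Y"
  using phiA_add[of X "(-1) *\<^sub>R Y"] phiA_scaleR[of Y "-1"] scaleR_in[of Y "-1"] by simp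

lemma br_in: "X \<in> G \<Longrightarrow> Y \<in> G \<Longrightarrow> br X Y \<in> G"
  and br_add_right: "X \<in> G \<Longrightarrow> Y \<in> G \<Longrightarrow> Z \<in> G \<Longrightarrow> br X (Y + Z) = br X Y + br X Z"
  and br_scaleR_right: "X \<in> G \<Longrightarrow> Y \<in> G \<Longrightarrow> br X (c *\<^sub>R Y) = c *\<^sub>R br X Y"
  and br_skew: "X \<in> G \<Longrightarrow> Y \<in> G \<Longrightarrow> br X Y = - br Y X"
  and br_phiA: "X \<in> G \<Longrightarrow> Y \<in> G \<Longrightarrow> phiA (br X Y) = br (phiA X) (phiA Y)"
  and br_Jacobi: "X \<in> G \<Longrightarrow> Y \<in> G \<Longrightarrow> Z \<in> G \<Longrightarrow>
      br (phiA X) (br Y Z) + br (phiA Y) (br Z X) + br (phiA Z) (br X Y) = 0"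
  using Lie_algebra unfolding hom_Lie_algebra_def real_linear_on_def by blast+

lemma br_diff_right: "X \<in> G \<Longrightarrow> Y \<in> G \<Longrightarrow> Z \<in> G \<Longrightarrow> br X (Y - Z) = br X Y - br X Z"
  using br_add_right[of X Y "(-1) *\<^sub>R Z"] br_scaleR_right[of X Z "-1"] scaleR_in[of Z "-1"]
  by simp

lemma br_diff_left: "X \<in> G \<Longrightarrow> Y \<in> G \<Longrightarrow> Z \<in> G \<Longrightarrow> br (X - Y) Z = br X Z - br Y Z"
  using br_skew[of "X - Y" Z] br_skew[of X Z] br_skew[of Y Z] br_diff_right[of Z X Y] diff_in
  by simp

lemma br_br_phiA:
  assumes "X \<in> G" "Y \<in> G" "W \<in> G"
  shows "br (br X Y) (phiA W) = br (phiA X) (br Y W) - br (phiA Y) (br X W)"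
proof -
  have "br (br X Y) (phiA W) = - br (phiA W) (br X Y)"
    using br_skew[OF phiA_in[OF assms(3)] br_in[OF assms(1,2)]] by simp
  also have "\<dots> = br (phiA X) (br Y W) + br (phiA Y) (br W X)"
    using br_Jacobi[OF assms(1,2,3)]
      minus_unique[of "br (phiA W) (br X Y)" "br (phiA X) (br Y W) + br (phiA Y) (br W X)"]
    by (simp add: ac_simps)
  also have "br (phiA Y) (br W X) = - br (phiA Y) (br X W)"
    using br_skew[of W X] br_scaleR_right[of "phiA Y" "br X W" "-1"] assms phiA_in br_in
    by simp
  finally show ?thesis by simp
qed

lemma anchor_derivation: "X \<in> G \<Longrightarrow> phi_derivation Cs \<phi> (a X)"
  and anchor_add: "X \<in> G \<Longrightarrow> Y \<in> G \<Longrightarrow> f \<in> Cs \<Longrightarrow> a (X + Y) f = a X f + a Y f"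
  and anchor_sm: "X \<in> G \<Longrightarrow> h \<in> Cs \<Longrightarrow> f \<in> Cs \<Longrightarrow> a (sm h X) f = h * a X f"
  using anchor unfolding anchor_map_def by blast+

lemma anchor_in_Cs: "X \<in> G \<Longrightarrow> f \<in> Cs \<Longrightarrow> a X f \<in> Cs"
  using anchor_derivation unfolding phi_derivation_def by blast

lemma anchor_diff_fun:
  assumes "X \<in> G" "f \<in> Cs" "h \<in> Cs"
  shows "a X (f - h) = a X f - a X h"
proof -
  have add: "a X (f + k) = a X f + a X k" and scale: "a X ((\<lambda>_. -1) * k) = (\<lambda>_. -1) * a X k"
    if "k \<in> Cs" for k
    using anchor_derivation[OF assms(1)] assms(2) that unfolding phi_derivation_def by blast+
  have "- h \<in> Cs"
    using function_algebra assms(3) unfolding function_algebra_def by blast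
  then show ?thesis
    using add[of "- h"] scale[OF assms(3)] by (simp add: const_minus_one_times)
qed

lemma anchor_diff:
  assumes "X \<in> G" "Y \<in> G" "f \<in> Cs"
  shows "a (X - Y) f = a X f - a Y f"
proof -
  have "a (X - Y) f = a (X + sm (\<lambda>_. -1) Y) f"
    using sm_const[OF assms(2)] by simp
  also have "\<dots> = a X f + (\<lambda>_. -1) * a Y f"
    using anchor_add anchor_sm assms sm_in const_in_Cs by simp
  finally show ?thesis
    by (simp add: const_minus_one_times)
qed

lemma hom_Lie_algebra_subset:
  assumes "E \<subseteq> G" "\<And>X Y. X \<in> E \<Longrightarrow> Y \<in> E \<Longrightarrow> br X Y \<in> E"
  shows "hom_Lie_algebra E phiA br"
proof -
  have G: "X \<in> G" if "X \<in> E" for X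
    using assms(1) that by blast
  show ?thesis
    unfolding hom_Lie_algebra_def real_linear_on_def
    by (intro conjI ballI allI;
        rule assms(2) br_add_right br_scaleR_right br_skew br_phiA br_Jacobi;
        (assumption | rule G, assumption))
qed

lemma hom_Lie_algebroid_subset:
  assumes sub: "E \<subseteq> G" and zero: "0 \<in> E" and add: "\<And>X Y. X \<in> E \<Longrightarrow> Y \<in> E \<Longrightarrow> X + Y \<in> E"
    and sm: "\<And>X f. X \<in> E \<Longrightarrow> f \<in> Cs \<Longrightarrow> sm f X \<in> E"
    and br_E: "\<And>X Y. X \<in> E \<Longrightarrow> Y \<in> E \<Longrightarrow> br X Y \<in> E"
    and image: "phiA ` E = E"
  shows "hom_Lie_algebroid Cs \<phi> sm E phiA br a"
proof -
  have G: "X \<in> G" if "X \<in> E" for X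
    using sub that by blast
  have "sec_module Cs sm E"
    using sections zero add sm unfolding sec_module_def by (auto dest!: G)
  moreover have "bij_betw phiA E E"
    using phiA_bij sub image by (metis bij_betw_def inj_on_subset)
  ultimately have "hom_bundle Cs \<phi> sm E phiA"
    using phiA_add phiA_scaleR phiA_sm unfolding hom_bundle_def real_linear_on_def by (auto dest!: G)
  moreover have "anchor_map Cs \<phi> sm E a"
    using anchor_derivation anchor_add anchor_sm unfolding anchor_map_def by (auto dest!: G)
  moreover have "hom_Lie_algebra E phiA br"
    using sub br_E by (rule hom_Lie_algebra_subset)
  ultimately show ?thesis
    using br_sm_right anchor_pb anchor_br unfolding hom_Lie_algebroid_def by (auto dest!: G)
qed

end

lemma diff_diff_rearrange:
  fixes p p' q q' t t' u u' v w :: "'b::ab_group_add"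
  assumes "p - p' = t - t'" and "q - q' = u' - u"
  shows "(p - q) - ((t - v) - (w - u)) = (p' - q') - ((t' - w) - (v - u'))"
proof -
  have p: "p = t - t' + p'" and q: "q = u' - u + q'"
    using assms by (simp_all add: diff_eq_eq)
  show ?thesis
    unfolding p q by (simp add: algebra_simps)
qed

locale form_induced_product = hom_Lie_algebroid_on Cs \<phi> sm G phiA br a
  for Cs :: "('m \<Rightarrow> real) set" and \<phi> :: "'m \<Rightarrow> 'm"
    and sm :: "('m \<Rightarrow> real) \<Rightarrow> 'a::real_vector \<Rightarrow> 'a" and G :: "'a set"
    and phiA :: "'a \<Rightarrow> 'a" and br :: "'a \<Rightarrow> 'a \<Rightarrow> 'a"
    and a :: "'a \<Rightarrow> ('m \<Rightarrow> real) \<Rightarrow> ('m \<Rightarrow> real)" +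
  fixes \<Omega> :: "'a \<Rightarrow> 'a \<Rightarrow> ('m \<Rightarrow> real)" and nablaa :: "'a \<Rightarrow> 'a \<Rightarrow> 'a"
  assumes form_in_Cs: "X \<in> G \<Longrightarrow> Y \<in> G \<Longrightarrow> \<Omega> X Y \<in> Cs"
    and form_diff_left: "X \<in> G \<Longrightarrow> Y \<in> G \<Longrightarrow> Z \<in> G \<Longrightarrow> \<Omega> (X - Y) Z = \<Omega> X Z - \<Omega> Y Z"
    and form_diff_right: "X \<in> G \<Longrightarrow> Y \<in> G \<Longrightarrow> Z \<in> G \<Longrightarrow> \<Omega> Z (X - Y) = \<Omega> Z X - \<Omega> Z Y"
    and form_phiA: "X \<in> G \<Longrightarrow> Y \<in> G \<Longrightarrow> \<Omega> (phiA X) (phiA Y) = pb \<phi> (\<Omega> X Y)"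
    and form_nondegenerate: "U \<in> G \<Longrightarrow> (\<And>Z. Z \<in> G \<Longrightarrow> \<Omega> U Z = 0) \<Longrightarrow> U = 0"
    and product_in: "X \<in> G \<Longrightarrow> Y \<in> G \<Longrightarrow> nablaa X Y \<in> G"
    and form_product: "X \<in> G \<Longrightarrow> Y \<in> G \<Longrightarrow> Z \<in> G \<Longrightarrow>
      \<Omega> (nablaa X Y) (phiA Z) = a (phiA X) (\<Omega> Y Z) - \<Omega> (phiA Y) (br X Z)"
begin

lemma form_ext:
  assumes "U \<in> G" "V \<in> G"
    and "\<And>W. W \<in> G \<Longrightarrow> \<Omega> U (phiA (phiA W)) = \<Omega> V (phiA (phiA W))"
  shows "U = V"
proof -
  have "U - V = 0"
  proof (rule form_nondegenerate)
    show "U - V \<in> G"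
      using assms(1,2) by (rule diff_in)
    fix Z assume "Z \<in> G"
    then obtain W where "W \<in> G" "Z = phiA (phiA W)"
      using phiA_surj by metis
    then show "\<Omega> (U - V) Z = 0"
      using assms form_diff_left phiA_in by simp
  qed
  then show ?thesis by simp
qed

lemma product_phiA:
  assumes "Y \<in> G" "Z \<in> G"
  shows "phiA (nablaa Y Z) = nablaa (phiA Y) (phiA Z)"
proof (rule form_ext)
  show "phiA (nablaa Y Z) \<in> G" "nablaa (phiA Y) (phiA Z) \<in> G"
    using assms product_in phiA_in by auto
  fix W assume W: "W \<in> G"
  have Cs: "\<Omega> Z W \<in> Cs" "\<Omega> (phiA Z) (br Y W) \<in> Cs"
    using form_in_Cs assms W phiA_in br_in by auto
  have "\<Omega> (phiA (nablaa Y Z)) (phiA (phiA W)) = pb \<phi> (\<Omega> (nablaa Y Z) (phiA W))"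
    using form_phiA product_in assms W phiA_in by simp
  also have "\<dots> = pb \<phi> (a (phiA Y) (\<Omega> Z W)) - pb \<phi> (\<Omega> (phiA Z) (br Y W))"
    using form_product assms W pb_diff by simp
  also have "\<dots> = a (phiA (phiA Y)) (pb \<phi> (\<Omega> Z W)) - \<Omega> (phiA (phiA Z)) (phiA (br Y W))"
    using anchor_pb Cs form_phiA assms W phiA_in br_in by simp
  also have "\<dots> = \<Omega> (nablaa (phiA Y) (phiA Z)) (phiA (phiA W))"
    using form_product form_phiA br_phiA assms W phiA_in by simp
  finally show "\<Omega> (phiA (nablaa Y Z)) (phiA (phiA W)) = \<Omega> (nablaa (phiA Y) (phiA Z)) (phiA (phiA W))" .
qed

lemma form_product_phiA:
  assumes "U \<in> G" "Z \<in> G" "W \<in> G"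
  shows "\<Omega> (nablaa U (phiA Z)) (phiA (phiA W))
    = a (phiA U) (pb \<phi> (\<Omega> Z W)) - \<Omega> (phiA (phiA Z)) (br U (phiA W))"
  using form_product[of U "phiA Z" "phiA W"] form_phiA assms phiA_in by simp

lemma form_product_product:
  assumes "X \<in> G" "Y \<in> G" "Z \<in> G" "W \<in> G"
  shows "\<Omega> (nablaa (phiA X) (nablaa Y Z)) (phiA (phiA W))
    = (a (phiA (phiA X)) (a (phiA Y) (\<Omega> Z W)) - a (phiA (phiA X)) (\<Omega> (phiA Z) (br Y W)))
      - (a (phiA (phiA Y)) (\<Omega> (phiA Z) (br X W)) - \<Omega> (phiA (phiA Z)) (br (phiA Y) (br X W)))"
proof -
  have Cs: "a (phiA Y) (\<Omega> Z W) \<in> Cs" "\<Omega> (phiA Z) (br Y W) \<in> Cs"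
    using form_in_Cs anchor_in_Cs assms phiA_in br_in by auto
  have "\<Omega> (nablaa (phiA X) (nablaa Y Z)) (phiA (phiA W))
      = a (phiA (phiA X)) (\<Omega> (nablaa Y Z) (phiA W))
        - \<Omega> (phiA (nablaa Y Z)) (br (phiA X) (phiA W))"
    using form_product assms phiA_in product_in by simp
  also have "a (phiA (phiA X)) (\<Omega> (nablaa Y Z) (phiA W))
      = a (phiA (phiA X)) (a (phiA Y) (\<Omega> Z W)) - a (phiA (phiA X)) (\<Omega> (phiA Z) (br Y W))"
    using form_product anchor_diff_fun Cs assms phiA_in by simp
  also have "\<Omega> (phiA (nablaa Y Z)) (br (phiA X) (phiA W))
      = \<Omega> (nablaa (phiA Y) (phiA Z)) (phiA (br X W))"
    using product_phiA br_phiA assms by simp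
  also have "\<dots> = a (phiA (phiA Y)) (\<Omega> (phiA Z) (br X W))
      - \<Omega> (phiA (phiA Z)) (br (phiA Y) (br X W))"
    using form_product assms phiA_in br_in by simp
  finally show ?thesis .
qed

lemma product_hom_left_symmetric:
  assumes G: "X \<in> G" "Y \<in> G" "Z \<in> G"
    and torsion_free: "nablaa X Y - nablaa Y X = br X Y"
  shows "nablaa (nablaa X Y) (phiA Z) - nablaa (phiA X) (nablaa Y Z)
       = nablaa (nablaa Y X) (phiA Z) - nablaa (phiA Y) (nablaa X Z)"
proof (rule form_ext)
  have U: "nablaa X Y \<in> G" "nablaa Y X \<in> G"
    using G product_in by auto
  show "nablaa (nablaa X Y) (phiA Z) - nablaa (phiA X) (nablaa Y Z) \<in> G"
    "nablaa (nablaa Y X) (phiA Z) - nablaa (phiA Y) (nablaa X Z) \<in> G"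
    using G U product_in phiA_in diff_in by auto
  fix W assume W: "W \<in> G"
  have "pb \<phi> (\<Omega> Z W) \<in> Cs"
    using form_in_Cs pb_in_Cs G W by auto
  then have "a (phiA (nablaa X Y)) (pb \<phi> (\<Omega> Z W)) - a (phiA (nablaa Y X)) (pb \<phi> (\<Omega> Z W))
      = a (phiA (nablaa X Y) - phiA (nablaa Y X)) (pb \<phi> (\<Omega> Z W))"
    using anchor_diff U phiA_in by simp
  also have "phiA (nablaa X Y) - phiA (nablaa Y X) = br (phiA X) (phiA Y)"
    using phiA_diff[OF U] torsion_free br_phiA G by simp
  also have "a (br (phiA X) (phiA Y)) (pb \<phi> (\<Omega> Z W))
      = a (phiA (phiA X)) (a (phiA Y) (\<Omega> Z W)) - a (phiA (phiA Y)) (a (phiA X) (\<Omega> Z W))"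
    using anchor_br G W phiA_in form_in_Cs by simp
  finally have anchor_terms: "a (phiA (nablaa X Y)) (pb \<phi> (\<Omega> Z W)) - a (phiA (nablaa Y X)) (pb \<phi> (\<Omega> Z W))
      = a (phiA (phiA X)) (a (phiA Y) (\<Omega> Z W)) - a (phiA (phiA Y)) (a (phiA X) (\<Omega> Z W))" .
  have "\<Omega> (phiA (phiA Z)) (br (nablaa X Y) (phiA W)) - \<Omega> (phiA (phiA Z)) (br (nablaa Y X) (phiA W))
      = \<Omega> (phiA (phiA Z)) (br (nablaa X Y) (phiA W) - br (nablaa Y X) (phiA W))"
    using form_diff_right U G W phiA_in br_in by simp
  also have "br (nablaa X Y) (phiA W) - br (nablaa Y X) (phiA W)
      = br (phiA X) (br Y W) - br (phiA Y) (br X W)"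
    using br_diff_left[OF U phiA_in[OF W]] torsion_free br_br_phiA G W by simp
  also have "\<Omega> (phiA (phiA Z)) \<dots>
      = \<Omega> (phiA (phiA Z)) (br (phiA X) (br Y W)) - \<Omega> (phiA (phiA Z)) (br (phiA Y) (br X W))"
    using form_diff_right G W phiA_in br_in by simp
  finally have bracket_terms: "\<Omega> (phiA (phiA Z)) (br (nablaa X Y) (phiA W))
        - \<Omega> (phiA (phiA Z)) (br (nablaa Y X) (phiA W))
      = \<Omega> (phiA (phiA Z)) (br (phiA X) (br Y W)) - \<Omega> (phiA (phiA Z)) (br (phiA Y) (br X W))" .
  show "\<Omega> (nablaa (nablaa X Y) (phiA Z) - nablaa (phiA X) (nablaa Y Z)) (phiA (phiA W))
      = \<Omega> (nablaa (nablaa Y X) (phiA Z) - nablaa (phiA Y) (nablaa X Z)) (phiA (phiA W))"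
    using U G W
    by (simp only: form_diff_left form_product_phiA form_product_product product_in phiA_in)
      (rule diff_diff_rearrange[OF anchor_terms bracket_terms])
qed

end

locale para_Kaehler_setting =
  fixes Cs :: "('m \<Rightarrow> real) set" and \<phi> :: "'m \<Rightarrow> 'm"
    and sm :: "('m \<Rightarrow> real) \<Rightarrow> 'a::real_vector \<Rightarrow> 'a" and G :: "'a set"
    and phiA K :: "'a \<Rightarrow> 'a" and br nabla nablaa :: "'a \<Rightarrow> 'a \<Rightarrow> 'a"
    and a :: "'a \<Rightarrow> ('m \<Rightarrow> real) \<Rightarrow> ('m \<Rightarrow> real)"
    and g \<Omega> :: "'a \<Rightarrow> 'a \<Rightarrow> ('m \<Rightarrow> real)"
  assumes para_Kaehler: "para_Kaehler_hom_Lie_algebroid Cs \<phi> sm G phiA br a K g nabla"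
    and Omega_def: "\<And>X Y. \<Omega> X Y = g (phiA (K X)) Y"
    and nablaa_in: "\<forall>X\<in>G. \<forall>Y\<in>G. nablaa X Y \<in> G"
    and nablaa_def: "\<forall>X\<in>G. \<forall>Y\<in>G. \<forall>Z\<in>G.
      \<Omega> (nablaa X Y) (phiA Z) = a (phiA X) (\<Omega> Y Z) - \<Omega> (phiA Y) (br X Z)"
begin

abbreviation J :: "'a \<Rightarrow> 'a" where
  "J X \<equiv> phiA (K X)"

lemma metric: "pseudo_metric Cs \<phi> sm G phiA g"
  and para_complex: "almost_para_complex Cs sm G phiA K"
  and g_J_J: "X \<in> G \<Longrightarrow> Y \<in> G \<Longrightarrow> g (J X) (J Y) = - g X Y"
  and Levi_Civita: "hom_Levi_Civita Cs \<phi> sm G phiA br a g nabla"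
  and nabla_J: "X \<in> G \<Longrightarrow> Y \<in> G \<Longrightarrow> nabla X (J Y) = J (nabla X Y)"
  using para_Kaehler unfolding para_Kaehler_hom_Lie_algebroid_def by blast+

sublocale hom_Lie_algebroid_on Cs \<phi> sm G phiA br a
  using para_Kaehler unfolding para_Kaehler_hom_Lie_algebroid_def
  by unfold_locales blast+

lemma K_in: "X \<in> G \<Longrightarrow> K X \<in> G"
  and J_J: "X \<in> G \<Longrightarrow> J (J X) = X"
  and J_phiA: "X \<in> G \<Longrightarrow> J (phiA X) = phiA (J X)"
  and J_add: "X \<in> G \<Longrightarrow> Y \<in> G \<Longrightarrow> J (X + Y) = J X + J Y"
  and J_sm: "X \<in> G \<Longrightarrow> f \<in> Cs \<Longrightarrow> J (sm f X) = sm f (J X)"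
  using para_complex unfolding almost_para_complex_def by (auto intro: bij_betw_apply)

lemma J_in: "X \<in> G \<Longrightarrow> J X \<in> G"
  using K_in phiA_in by blast

lemma J_scaleR: "X \<in> G \<Longrightarrow> J (c *\<^sub>R X) = c *\<^sub>R J X"
  using J_sm[OF _ const_in_Cs] sm_const J_in by metis

lemma J_diff: "X \<in> G \<Longrightarrow> Y \<in> G \<Longrightarrow> J (X - Y) = J X - J Y"
  using J_add[of X "(-1) *\<^sub>R Y"] J_scaleR[of Y "-1"] scaleR_in[of Y "-1"] by simp

lemma J_zero: "J 0 = 0"
  using J_scaleR[OF zero_in, of 0] by simp

lemma g_in_Cs: "X \<in> G \<Longrightarrow> Y \<in> G \<Longrightarrow> g X Y \<in> Cs"
  and g_sym: "X \<in> G \<Longrightarrow> Y \<in> G \<Longrightarrow> g X Y = g Y X"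
  and g_add: "X \<in> G \<Longrightarrow> Y \<in> G \<Longrightarrow> Z \<in> G \<Longrightarrow> g (X + Y) Z = g X Z + g Y Z"
  and g_sm: "X \<in> G \<Longrightarrow> Y \<in> G \<Longrightarrow> f \<in> Cs \<Longrightarrow> g (sm f X) Y = f * g X Y"
  and g_nondegenerate: "X \<in> G \<Longrightarrow> (\<And>Y. Y \<in> G \<Longrightarrow> g X Y = 0) \<Longrightarrow> X = 0"
  and g_phiA: "X \<in> G \<Longrightarrow> Y \<in> G \<Longrightarrow> g (phiA X) (phiA Y) = pb \<phi> (g X Y)"
  using metric unfolding pseudo_metric_def by blast+

lemma g_scaleR: "X \<in> G \<Longrightarrow> Y \<in> G \<Longrightarrow> g (c *\<^sub>R X) Y = (\<lambda>_. c) * g X Y"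
  using g_sm[OF _ _ const_in_Cs] sm_const by metis

lemma g_diff_left: "X \<in> G \<Longrightarrow> Y \<in> G \<Longrightarrow> Z \<in> G \<Longrightarrow> g (X - Y) Z = g X Z - g Y Z"
  using g_add[of X "(-1) *\<^sub>R Y" Z] g_scaleR[of Y Z "-1"] scaleR_in[of Y "-1"]
  by (simp add: const_minus_one_times)

lemma g_diff_right: "X \<in> G \<Longrightarrow> Y \<in> G \<Longrightarrow> Z \<in> G \<Longrightarrow> g Z (X - Y) = g Z X - g Z Y"
  using g_diff_left g_sym diff_in by metis

lemma nabla_in: "X \<in> G \<Longrightarrow> Y \<in> G \<Longrightarrow> nabla X Y \<in> G"
  and nabla_scaleR: "X \<in> G \<Longrightarrow> Y \<in> G \<Longrightarrow> nabla X (c *\<^sub>R Y) = c *\<^sub>R nabla X Y"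
  and nabla_torsion_free: "X \<in> G \<Longrightarrow> Y \<in> G \<Longrightarrow> br X Y = nabla X Y - nabla Y X"
  and nabla_metric: "X \<in> G \<Longrightarrow> Y \<in> G \<Longrightarrow> Z \<in> G \<Longrightarrow>
      a (phiA X) (g Y Z) = g (nabla X Y) (phiA Z) + g (phiA Y) (nabla X Z)"
  using Levi_Civita unfolding hom_Levi_Civita_def real_linear_on_def by auto

lemma form_nabla: "X \<in> G \<Longrightarrow> Y \<in> G \<Longrightarrow> Z \<in> G \<Longrightarrow>
    a (phiA X) (\<Omega> Y Z) = \<Omega> (nabla X Y) (phiA Z) + \<Omega> (phiA Y) (nabla X Z)"
  using nabla_metric[of X "J Y" Z] by (simp add: Omega_def J_in nabla_J J_phiA)

sublocale form_induced_product Cs \<phi> sm G phiA br a \<Omega> nablaa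
proof unfold_locales
  fix U assume U: "U \<in> G" and null: "\<And>Z. Z \<in> G \<Longrightarrow> \<Omega> U Z = 0"
  have "J U = 0"
    using g_nondegenerate[OF J_in[OF U]] null by (simp add: Omega_def)
  then show "U = 0"
    using J_J[OF U] J_zero by simp
qed (use nablaa_in nablaa_def in
      \<open>simp_all add: Omega_def g_in_Cs J_in J_diff g_diff_left g_diff_right J_phiA g_phiA\<close>)

abbreviation eigen :: "real \<Rightarrow> 'a set" where
  "eigen \<epsilon> \<equiv> eigen_sections G phiA K \<epsilon>"

lemma eigen_iff: "X \<in> eigen \<epsilon> \<longleftrightarrow> X \<in> G \<and> J X = \<epsilon> *\<^sub>R X"
  by (simp add: eigen_sections_def)

lemma eigen_subset: "eigen \<epsilon> \<subseteq> G"
  by (auto simp: eigen_iff)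

lemma zero_in_eigen: "0 \<in> eigen \<epsilon>"
  by (simp add: eigen_iff zero_in J_zero)

lemma add_in_eigen: "X \<in> eigen \<epsilon> \<Longrightarrow> Y \<in> eigen \<epsilon> \<Longrightarrow> X + Y \<in> eigen \<epsilon>"
  by (simp add: eigen_iff add_in J_add scaleR_add_right)

lemma sm_in_eigen:
  assumes "X \<in> eigen \<epsilon>" "f \<in> Cs"
  shows "sm f X \<in> eigen \<epsilon>"
proof -
  have X: "X \<in> G" "J X = \<epsilon> *\<^sub>R X"
    using assms(1) by (simp_all add: eigen_iff)
  have "J (sm f X) = sm f (sm (\<lambda>_. \<epsilon>) X)"
    using J_sm X assms(2) sm_const by simp
  also have "\<dots> = sm (\<lambda>_. \<epsilon>) (sm f X)"
    using sm_mult[symmetric] X assms(2) const_in_Cs by (simp add: mult.commute)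
  also have "\<dots> = \<epsilon> *\<^sub>R sm f X"
    using sm_const sm_in X assms(2) by blast
  finally show ?thesis
    using sm_in X assms(2) by (simp add: eigen_iff)
qed

lemma phiA_eigen_image: "phiA ` eigen \<epsilon> = eigen \<epsilon>"
proof
  show "phiA ` eigen \<epsilon> \<subseteq> eigen \<epsilon>"
    by (auto simp: eigen_iff phiA_in J_phiA phiA_scaleR)
  show "eigen \<epsilon> \<subseteq> phiA ` eigen \<epsilon>"
  proof
    fix Y assume Y: "Y \<in> eigen \<epsilon>"
    then obtain X where X: "X \<in> G" "Y = phiA X"
      using phiA_surj eigen_subset by blast
    have "phiA (J X) = phiA (\<epsilon> *\<^sub>R X)"
      using J_phiA X Y by (simp add: eigen_iff phiA_scaleR)
    then have "J X = \<epsilon> *\<^sub>R X"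
      using phiA_inj J_in scaleR_in X by blast
    then show "Y \<in> phiA ` eigen \<epsilon>"
      using X by (simp add: eigen_iff)
  qed
qed

lemma nabla_in_eigen:
  assumes "X \<in> G" "Y \<in> eigen \<epsilon>"
  shows "nabla X Y \<in> eigen \<epsilon>"
proof -
  have Y: "Y \<in> G" "J Y = \<epsilon> *\<^sub>R Y"
    using assms(2) by (simp_all add: eigen_iff)
  have "J (nabla X Y) = \<epsilon> *\<^sub>R nabla X Y"
    using nabla_J[OF assms(1) Y(1)] nabla_scaleR assms(1) Y by simp
  then show ?thesis
    using nabla_in assms(1) Y by (simp add: eigen_iff)
qed

lemma diff_in_eigen: "X \<in> eigen \<epsilon> \<Longrightarrow> Y \<in> eigen \<epsilon> \<Longrightarrow> X - Y \<in> eigen \<epsilon>"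
  by (simp add: eigen_iff diff_in J_diff scaleR_diff_right)

lemma br_in_eigen:
  assumes "X \<in> eigen \<epsilon>" "Y \<in> eigen \<epsilon>"
  shows "br X Y \<in> eigen \<epsilon>"
proof -
  have "X \<in> G" "Y \<in> G"
    using assms eigen_subset by auto
  then show ?thesis
    using nabla_torsion_free diff_in_eigen nabla_in_eigen assms by simp
qed

lemma g_eigen_isotropic:
  assumes "\<epsilon> = 1 \<or> \<epsilon> = -1" "X \<in> eigen \<epsilon>" "Y \<in> eigen \<epsilon>"
  shows "g X Y = 0"
proof -
  have G: "X \<in> G" "Y \<in> G"
    using assms eigen_subset by auto
  have "- g X Y = g (\<epsilon> *\<^sub>R X) (\<epsilon> *\<^sub>R Y)"
    using g_J_J[OF G] assms by (simp add: eigen_iff)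
  also have "\<dots> = (\<lambda>_. \<epsilon> * \<epsilon>) * g X Y"
    using g_scaleR g_sym G scaleR_in by (simp add: fun_eq_iff)
  also have "\<dots> = g X Y"
    using assms(1) by (auto simp: fun_eq_iff)
  finally show ?thesis
    by (simp add: fun_eq_iff)
qed

lemma form_eigen_isotropic:
  assumes "\<epsilon> = 1 \<or> \<epsilon> = -1" "X \<in> eigen \<epsilon>" "Y \<in> eigen \<epsilon>"
  shows "\<Omega> X Y = 0"
  using g_eigen_isotropic[OF assms] g_scaleR assms eigen_subset
  by (auto simp: Omega_def eigen_iff)

text \<open>On an eigenbundle the term \<open>\<Omega>(\<phi>\<^sub>A Y, \<nabla>\<^bsub>Z\<^esub> X)\<close> that separates the two connections vanishes.\<close>
lemma product_eq_nabla:
  assumes "\<epsilon> = 1 \<or> \<epsilon> = -1" "X \<in> eigen \<epsilon>" "Y \<in> eigen \<epsilon>"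
  shows "nablaa X Y = nabla X Y"
proof (rule form_ext)
  have G: "X \<in> G" "Y \<in> G"
    using assms eigen_subset by auto
  show "nablaa X Y \<in> G" "nabla X Y \<in> G"
    using G product_in nabla_in by auto
  fix W assume "W \<in> G"
  then have Z: "phiA W \<in> G"
    by (rule phiA_in)
  have "\<Omega> (phiA Y) (nabla (phiA W) X) = 0"
    using form_eigen_isotropic assms phiA_eigen_image nabla_in_eigen Z by blast
  then have "\<Omega> (phiA Y) (br X (phiA W)) = \<Omega> (phiA Y) (nabla X (phiA W))"
    using nabla_torsion_free form_diff_right G Z phiA_in nabla_in by simp
  then show "\<Omega> (nablaa X Y) (phiA (phiA W)) = \<Omega> (nabla X Y) (phiA (phiA W))"
    using form_product form_nabla G Z by simp
qed

lemma product_in_eigen: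
  assumes "\<epsilon> = 1 \<or> \<epsilon> = -1" "X \<in> eigen \<epsilon>" "Y \<in> eigen \<epsilon>"
  shows "nablaa X Y \<in> eigen \<epsilon>"
proof -
  have "X \<in> G"
    using assms(2) eigen_subset by auto
  then show ?thesis
    using product_eq_nabla[OF assms] nabla_in_eigen assms(3) by simp
qed

lemma product_commutator_eigen:
  assumes "\<epsilon> = 1 \<or> \<epsilon> = -1" "X \<in> eigen \<epsilon>" "Y \<in> eigen \<epsilon>"
  shows "nablaa X Y - nablaa Y X = br X Y"
proof -
  have "X \<in> G" "Y \<in> G"
    using assms(2,3) eigen_subset by auto
  then show ?thesis
    using product_eq_nabla[OF assms] product_eq_nabla[OF assms(1,3,2)] nabla_torsion_free by simp
qed

lemma eigen_hom_Lie_algebroid: "hom_Lie_algebroid Cs \<phi> sm (eigen \<epsilon>) phiA br a"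
  using eigen_subset zero_in_eigen add_in_eigen sm_in_eigen br_in_eigen phiA_eigen_image
  by (rule hom_Lie_algebroid_subset)

end

theorem mainTheorem7:
  fixes Cs :: "('m \<Rightarrow> real) set" and \<phi> :: "'m \<Rightarrow> 'm"
    and sm :: "('m \<Rightarrow> real) \<Rightarrow> 'a::real_vector \<Rightarrow> 'a" and G :: "'a set"
    and phiA K :: "'a \<Rightarrow> 'a" and br nabla nablaa :: "'a \<Rightarrow> 'a \<Rightarrow> 'a"
    and a :: "'a \<Rightarrow> ('m \<Rightarrow> real) \<Rightarrow> ('m \<Rightarrow> real)"
    and g \<Omega> :: "'a \<Rightarrow> 'a \<Rightarrow> ('m \<Rightarrow> real)" and \<epsilon> :: real
  assumes pK: "para_Kaehler_hom_Lie_algebroid Cs \<phi> sm G phiA br a K g nabla"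
    and Omega_def: "\<And>X Y. \<Omega> X Y = g (phiA (K X)) Y"
    and nablaa_sec: "\<forall>X\<in>G. \<forall>Y\<in>G. nablaa X Y \<in> G"
    and nablaa_def: "\<forall>X\<in>G. \<forall>Y\<in>G. \<forall>Z\<in>G.
          \<Omega> (nablaa X Y) (phiA Z) = a (phiA X) (\<Omega> Y Z) - \<Omega> (phiA Y) (br X Z)"
    and eps: "\<epsilon> = 1 \<or> \<epsilon> = -1"
  shows "(\<forall>X\<in>eigen_sections G phiA K \<epsilon>. \<forall>Y\<in>eigen_sections G phiA K \<epsilon>.
            nablaa X Y \<in> eigen_sections G phiA K \<epsilon>)
       \<and> (\<forall>X\<in>eigen_sections G phiA K \<epsilon>. \<forall>Y\<in>eigen_sections G phiA K \<epsilon>.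
          \<forall>Z\<in>eigen_sections G phiA K \<epsilon>.
            nablaa (nablaa X Y) (phiA Z) - nablaa (phiA X) (nablaa Y Z)
              = nablaa (nablaa Y X) (phiA Z) - nablaa (phiA Y) (nablaa X Z))
       \<and> (\<forall>X\<in>eigen_sections G phiA K \<epsilon>. \<forall>Y\<in>eigen_sections G phiA K \<epsilon>.
            nablaa X Y - nablaa Y X = br X Y)
       \<and> hom_Lie_algebra (eigen_sections G phiA K \<epsilon>) phiA br
       \<and> hom_Lie_algebroid Cs \<phi> sm (eigen_sections G phiA K \<epsilon>) phiA br a"
proof -
  interpret para_Kaehler_setting Cs \<phi> sm G phiA K br nabla nablaa a g \<Omega>
    using pK Omega_def nablaa_sec nablaa_def by unfold_locales
  have G: "X \<in> G" if "X \<in> eigen \<epsilon>" for X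
    using eigen_subset that by blast
  show ?thesis
  proof (intro conjI ballI)
    show "nablaa X Y \<in> eigen \<epsilon>" if "X \<in> eigen \<epsilon>" "Y \<in> eigen \<epsilon>" for X Y
      using eps that by (rule product_in_eigen)
    show "nablaa X Y - nablaa Y X = br X Y" if "X \<in> eigen \<epsilon>" "Y \<in> eigen \<epsilon>" for X Y
      using eps that by (rule product_commutator_eigen)
    show "nablaa (nablaa X Y) (phiA Z) - nablaa (phiA X) (nablaa Y Z)
        = nablaa (nablaa Y X) (phiA Z) - nablaa (phiA Y) (nablaa X Z)"
      if "X \<in> eigen \<epsilon>" "Y \<in> eigen \<epsilon>" "Z \<in> eigen \<epsilon>" for X Y Z
      using G that product_commutator_eigen[OF eps] by (intro product_hom_left_symmetric) auto
    show "hom_Lie_algebra (eigen \<epsilon>) phiA br"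
      using eigen_subset br_in_eigen by (rule hom_Lie_algebra_subset)
    show "hom_Lie_algebroid Cs \<phi> sm (eigen \<epsilon>) phiA br a"
      by (rule eigen_hom_Lie_algebroid)
  qed
qed

end
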